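(* Let $\mathbf{k}$ be an algebraically closed field, $G=\mathrm{GL}_n$, $M=\mathbf{k}^n$ the natural module, $\underline{G}=G\ltimes M$ and $\underline{\mathfrak{g}}=\mathrm{Lie}(\underline{G})=\mathfrak{gl}_n\times M$. For $(X,w)\in\underline{\mathcal{N}}$ let $\underline{\mathfrak{g}}_{(X,w)}=\{(Y,u)\in\underline{\mathfrak{g}}: [(X,w),(Y,u)]=0\}$ and $\underline{G}_{(X,w)}=\{(g,v)\in\underline{G}:\mathrm{Ad}(g,v)(X,w)=(X,w)\}$. Then (1) $\underline{\mathfrak{g}}_{(X,w)}=\mathrm{Lie}(\underline{G}_{(X,w)})$, and (2) $\underline{G}_{(X,w)}$ is connected.
   Context: $\underline{G}$ is $G\times M$ with product $(g_1,v_1)(g_2,v_2)=(g_1g_2,g_1v_2+v_1)$; the bracket on $\mathfrak{gl}_n\times M$ is $[(X_1,v_1),(X_2,v_2)]=([X_1,X_2],X_1v_2-X_2v_1)$; the adjoint action is $\mathrm{Ad}(g,v)(X,w)=(gXg^{-1},-(gXg^{-1})v+gw)$. $\underline{\mathcal{N}}=\mathcal{N}\times M$ with $\mathcal{N}$ the nilpotent cone of $\mathfrak{gl}_n$. *)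

theory Defs
  imports "HOL-Analysis.Analysis" "HOL-Computational_Algebra.Polynomial"
begin

definition alg_closed :: "'k::field itself \<Rightarrow> bool" where
  "alg_closed _ \<longleftrightarrow> (\<forall>p :: 'k poly. degree p > 0 \<longrightarrow> (\<exists>x. poly p x = 0))"

datatype ('k, 'v) pexpr =
    PVar 'v | PConst 'k
  | PAdd "('k, 'v) pexpr" "('k, 'v) pexpr"
  | PMul "('k, 'v) pexpr" "('k, 'v) pexpr"
  | PNeg "('k, 'v) pexpr"

primrec peval :: "('k::comm_ring_1, 'v) pexpr \<Rightarrow> ('v \<Rightarrow> 'k) \<Rightarrow> 'k" where
  "peval (PVar i) x = x i"
| "peval (PConst c) x = c"
| "peval (PAdd p q) x = peval p x + peval q x"
| "peval (PMul p q) x = peval p x * peval q x"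
| "peval (PNeg p) x = - peval p x"

primrec pdiff :: "('k::comm_ring_1, 'v) pexpr \<Rightarrow> ('v \<Rightarrow> 'k) \<Rightarrow> ('v \<Rightarrow> 'k) \<Rightarrow> 'k" where
  "pdiff (PVar i) x y = y i"
| "pdiff (PConst c) x y = 0"
| "pdiff (PAdd p q) x y = pdiff p x y + pdiff q x y"
| "pdiff (PMul p q) x y = pdiff p x y * peval q x + peval p x * pdiff q x y"
| "pdiff (PNeg p) x y = - pdiff p x y"

type_synonym ('k, 'n) pt = "('k ^ 'n ^ 'n) \<times> ('k ^ 'n)"

definition coords :: "('k, 'n::finite) pt \<Rightarrow> (('n \<times> 'n) + 'n) \<Rightarrow> 'k" where
  "coords z = (\<lambda>c. case c of Inl (i, j) \<Rightarrow> fst z $ i $ j | Inr i \<Rightarrow> snd z $ i)"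

text \<open>Zariski topology on Mat_n x k^n (basic opens are non-vanishing loci of polynomials);
  GL_n x k^n carries the subspace topology, so connectedness of a subset is intrinsic.\<close>
definition zariski :: "('k::comm_ring_1, 'n::finite) pt topology" where
  "zariski = topology_generated_by
     {{z. peval p (coords z) \<noteq> 0} | p :: ('k, ('n \<times> 'n) + 'n) pexpr. True}"

text \<open>Lie algebra of a closed subgroup H of G = GL_n \<ltimes> k^n: tangent space at the
  identity (1,0), i.e. the common kernel of the differentials at (1,0) of all polynomials
  vanishing on H (GL_n is open in Mat_n, so this is the tangent space of H).\<close>
definition Lie :: "('k::comm_ring_1, 'n::finite) pt set \<Rightarrow> ('k, 'n) pt set" where
  "Lie H = {Yu. \<forall>p :: ('k, ('n \<times> 'n) + 'n) pexpr.
      (\<forall>z\<in>H. peval p (coords z) = 0) \<longrightarrow>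
      pdiff p (coords (mat 1, 0)) (coords Yu) = 0}"

definition bracket :: "('k::field, 'n::finite) pt \<Rightarrow> ('k, 'n) pt \<Rightarrow> ('k, 'n) pt" where
  "bracket a b = (fst a ** fst b - fst b ** fst a, fst a *v snd b - fst b *v snd a)"

definition Ad :: "('k::field, 'n::finite) pt \<Rightarrow> ('k, 'n) pt \<Rightarrow> ('k, 'n) pt" where
  "Ad gv Xw = (let g = fst gv; v = snd gv; X = fst Xw; w = snd Xw;
               Z = g ** X ** matrix_inv g in (Z, - (Z *v v) + g *v w))"

definition nilpotent_mat :: "'k::field ^ 'n ^ 'n \<Rightarrow> bool" where
  "nilpotent_mat X \<longleftrightarrow> (\<exists>m. ((\<lambda>A. X ** A) ^^ m) (mat 1) = 0)"

definition centralizer :: "('k::field, 'n::finite) pt \<Rightarrow> ('k, 'n) pt set" where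
  "centralizer Xw = {Yu. bracket Xw Yu = (0, 0)}"

definition stabilizer :: "('k::field, 'n::finite) pt \<Rightarrow> ('k, 'n) pt set" where
  "stabilizer Xw = {gv. invertible (fst gv) \<and> Ad gv Xw = Xw}"

end

theory Submission
  imports Defs
begin

text \<open>
  Unfolding \<open>Ad\<close>, the stabilizer of \<open>(X, w)\<close> consists of the invertible points of
  the affine subspace \<open>{z. [(X, w), z] = (0, -w)}\<close>, whose space of directions is the
  centralizer. Restricted to a line of this subspace, every polynomial becomes a univariate
  polynomial; over an infinite field, one that is nonzero at some point of the line vanishes
  at only finitely many of its points. Hence any two nonempty basic Zariski opens of the
  stabilizer meet on the line joining two of their points, so the stabilizer is irreducible
  and in particular connected.
  A polynomial vanishing on the stabilizer, times \<open>det\<close>, vanishes identically on each line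
  through the identity in a centralizer direction, so its differential kills the
  centralizer; conversely, the affine equations of the subspace cut the tangent space down
  to the centralizer.
\<close>

section \<open>Univariate polynomials over an infinite field\<close>

lemma poly_eqI_infinite:
  fixes p q :: "'k::field poly"
  assumes "infinite (UNIV :: 'k set)" and "\<And>t. poly p t = poly q t"
  shows "p = q"
proof (rule ccontr)
  assume "p \<noteq> q"
  then have "finite {t. poly (p - q) t = 0}" by (intro poly_roots_finite) simp
  with assms show False by simp
qed

lemma poly_nonzero_somewhere:
  fixes p :: "'k::field poly"
  assumes "infinite (UNIV :: 'k set)" and "p \<noteq> 0"
  obtains t where "poly p t \<noteq> 0"
  using poly_eqI_infinite[OF assms(1), of p 0] assms(2) by auto

lemma infinite_UNIV_if_alg_closed:
  assumes "alg_closed TYPE('k::field)"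
  shows "infinite (UNIV :: 'k set)"
proof
  assume fin: "finite (UNIV :: 'k set)"
  define p :: "'k poly" where "p = (\<Prod>a\<in>UNIV. [:-a, 1:]) + 1"
  have "degree (\<Prod>a\<in>(UNIV :: 'k set). [:-a, 1:]) = card (UNIV :: 'k set)"
    by (subst degree_prod_sum_eq) auto
  moreover have "card (UNIV :: 'k set) > 0"
    using fin by (simp add: finite_UNIV_card_ge_0)
  ultimately have "degree p > 0"
    unfolding p_def by (metis degree_add_eq_left degree_1)
  then obtain x where "poly p x = 0"
    using assms unfolding alg_closed_def by blast
  moreover have "poly (\<Prod>a\<in>UNIV. [:-a, 1:]) x = 0"
    using fin by (simp add: poly_prod)
  ultimately show False unfolding p_def by simp
qed

section \<open>Polynomial expressions restricted to lines\<close>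

fun line_poly :: "('k::comm_ring_1, 'v) pexpr \<Rightarrow> ('v \<Rightarrow> 'k) \<Rightarrow> ('v \<Rightarrow> 'k) \<Rightarrow> 'k poly" where
  "line_poly (PVar i) x y = [:x i, y i:]"
| "line_poly (PConst c) x y = [:c:]"
| "line_poly (PAdd p q) x y = line_poly p x y + line_poly q x y"
| "line_poly (PMul p q) x y = line_poly p x y * line_poly q x y"
| "line_poly (PNeg p) x y = - line_poly p x y"

lemma poly_line_poly: "poly (line_poly p x y) t = peval p (\<lambda>v. x v + t * y v)"
  by (induction p) (auto simp: algebra_simps)

lemma coeff_0_line_poly: "coeff (line_poly p x y) 0 = peval p x"
  by (induction p) (auto simp: coeff_mult)

lemma coeff_1_line_poly: "coeff (line_poly p x y) 1 = pdiff p x y"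
  by (induction p) (auto simp: coeff_mult coeff_0_line_poly algebra_simps)

lemma pdiff_eq_if_affine_on_line:
  fixes p :: "('k::field, 'v) pexpr"
  assumes "infinite (UNIV :: 'k set)" and "\<And>t. peval p (\<lambda>v. x v + t * y v) = a + t * b"
  shows "pdiff p x y = b"
proof -
  have "line_poly p x y = [:a, b:]"
    by (rule poly_eqI_infinite[OF assms(1)]) (simp add: poly_line_poly assms(2))
  then show ?thesis using coeff_1_line_poly[of p x y] by simp
qed

definition polynomial_in :: "('a \<Rightarrow> 'v \<Rightarrow> 'k::comm_ring_1) \<Rightarrow> ('a \<Rightarrow> 'k) \<Rightarrow> bool" where
  "polynomial_in \<phi> F \<longleftrightarrow> (\<exists>p. \<forall>z. peval p (\<phi> z) = F z)"

lemma polynomial_in_const: "polynomial_in \<phi> (\<lambda>z. c)"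
  unfolding polynomial_in_def by (rule exI[of _ "PConst c"]) simp

lemma polynomial_in_coordinate: "polynomial_in \<phi> (\<lambda>z. \<phi> z v)"
  unfolding polynomial_in_def by (rule exI[of _ "PVar v"]) simp

lemma polynomial_in_peval: "polynomial_in \<phi> (\<lambda>z. peval p (\<phi> z))"
  unfolding polynomial_in_def by blast

lemma polynomial_in_add:
  assumes "polynomial_in \<phi> F" and "polynomial_in \<phi> G"
  shows "polynomial_in \<phi> (\<lambda>z. F z + G z)"
proof -
  from assms obtain p q where "\<And>z. peval p (\<phi> z) = F z" "\<And>z. peval q (\<phi> z) = G z"
    unfolding polynomial_in_def by blast
  then have "\<forall>z. peval (PAdd p q) (\<phi> z) = F z + G z" by simp
  then show ?thesis unfolding polynomial_in_def ..
qed

lemma polynomial_in_mult: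
  assumes "polynomial_in \<phi> F" and "polynomial_in \<phi> G"
  shows "polynomial_in \<phi> (\<lambda>z. F z * G z)"
proof -
  from assms obtain p q where "\<And>z. peval p (\<phi> z) = F z" "\<And>z. peval q (\<phi> z) = G z"
    unfolding polynomial_in_def by blast
  then have "\<forall>z. peval (PMul p q) (\<phi> z) = F z * G z" by simp
  then show ?thesis unfolding polynomial_in_def ..
qed

lemma polynomial_in_uminus:
  assumes "polynomial_in \<phi> F"
  shows "polynomial_in \<phi> (\<lambda>z. - F z)"
proof -
  from assms obtain p where "\<And>z. peval p (\<phi> z) = F z"
    unfolding polynomial_in_def by blast
  then have "\<forall>z. peval (PNeg p) (\<phi> z) = - F z" by simp
  then show ?thesis unfolding polynomial_in_def ..
qed

lemma polynomial_in_diff: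
  assumes "polynomial_in \<phi> F" and "polynomial_in \<phi> G"
  shows "polynomial_in \<phi> (\<lambda>z. F z - G z)"
  using polynomial_in_add[OF assms(1) polynomial_in_uminus[OF assms(2)]] by simp

lemma polynomial_in_sum:
  "finite A \<Longrightarrow> (\<And>i. i \<in> A \<Longrightarrow> polynomial_in \<phi> (F i)) \<Longrightarrow>
    polynomial_in \<phi> (\<lambda>z. \<Sum>i\<in>A. F i z)"
  by (induction A rule: finite_induct) (simp_all add: polynomial_in_const polynomial_in_add)

lemma polynomial_in_prod:
  "finite A \<Longrightarrow> (\<And>i. i \<in> A \<Longrightarrow> polynomial_in \<phi> (F i)) \<Longrightarrow>
    polynomial_in \<phi> (\<lambda>z. \<Prod>i\<in>A. F i z)"
  by (induction A rule: finite_induct) (simp_all add: polynomial_in_const polynomial_in_mult)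

definition pt_line :: "('k::comm_ring_1, 'n::finite) pt \<Rightarrow> ('k, 'n) pt \<Rightarrow> 'k \<Rightarrow> ('k, 'n) pt" where
  "pt_line a d t = (fst a + (\<chi> i j. t * fst d $ i $ j), snd a + t *s snd d)"

lemma coords_pt_line: "coords (pt_line a d t) = (\<lambda>c. coords a c + t * coords d c)"
  by (auto simp: fun_eq_iff coords_def pt_line_def split: sum.split)

lemma pt_line_0 [simp]: "pt_line a d 0 = a"
  by (simp add: pt_line_def vec_eq_iff prod_eq_iff)

lemma pt_line_zero_direction [simp]: "pt_line a (0, 0) t = a"
  by (simp add: pt_line_def vec_eq_iff prod_eq_iff)

lemma pt_line_1_diff [simp]: "pt_line a (b - a) 1 = b"
  by (simp add: pt_line_def vec_eq_iff prod_eq_iff)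

lemma coords_inject:
  assumes "coords a = coords b"
  shows "a = b"
proof -
  have "fst a $ i $ j = fst b $ i $ j" for i j
    using fun_cong[OF assms, of "Inl (i, j)"] by (simp add: coords_def)
  moreover have "snd a $ i = snd b $ i" for i
    using fun_cong[OF assms, of "Inr i"] by (simp add: coords_def)
  ultimately show ?thesis by (simp add: prod_eq_iff vec_eq_iff)
qed

lemma polynomial_in_coords_on_line:
  assumes "polynomial_in coords F"
  obtains q where "\<And>t. poly q t = F (pt_line a d t)"
proof -
  from assms obtain p where "\<And>z. peval p (coords z) = F z"
    unfolding polynomial_in_def by blast
  then have "poly (line_poly p (coords a) (coords d)) t = F (pt_line a d t)" for t
    by (simp add: poly_line_poly coords_pt_line[symmetric])
  then show thesis by (rule that)
qed

lemma polynomial_in_matrix_entry: "polynomial_in coords (\<lambda>z. fst z $ i $ j)"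
  using polynomial_in_coordinate[of coords "Inl (i, j)"] by (simp add: coords_def)

lemma polynomial_in_vector_entry: "polynomial_in coords (\<lambda>z. snd z $ i)"
  using polynomial_in_coordinate[of coords "Inr i"] by (simp add: coords_def)

lemma polynomial_in_coords_det: "polynomial_in coords (\<lambda>z. det (fst z))"
  unfolding det_def
  by (intro polynomial_in_sum polynomial_in_mult polynomial_in_const polynomial_in_prod
      polynomial_in_matrix_entry finite_permutations) simp_all

lemma polynomial_in_coords_bracket: "polynomial_in coords (\<lambda>z. coords (bracket Xw z) c)"
proof (cases c)
  case (Inl ij)
  then show ?thesis
    by (cases ij) (simp add: coords_def bracket_def matrix_matrix_mult_def,
        intro polynomial_in_diff polynomial_in_sum polynomial_in_mult polynomial_in_const
          polynomial_in_matrix_entry; simp)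
next
  case (Inr i)
  then show ?thesis
    by (simp add: coords_def bracket_def matrix_vector_mult_def,
        intro polynomial_in_diff polynomial_in_sum polynomial_in_mult polynomial_in_const
          polynomial_in_matrix_entry polynomial_in_vector_entry; simp)
qed

section \<open>The Zariski topology\<close>

lemma zariski_basic_open_within:
  assumes "openin zariski U" and "a \<in> U"
  obtains f :: "('k::idom, ('n::finite \<times> 'n) + 'n) pexpr"
  where "peval f (coords a) \<noteq> 0" and "{z. peval f (coords z) \<noteq> 0} \<subseteq> U"
proof -
  have "generate_topology_on
          {{z. peval p (coords z) \<noteq> 0} | p :: ('k, ('n \<times> 'n) + 'n) pexpr. True} U"
    using assms(1) unfolding zariski_def openin_topology_generated_by_iff .
  then have "\<exists>f :: ('k, ('n \<times> 'n) + 'n) pexpr.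
               peval f (coords a) \<noteq> 0 \<and> {z. peval f (coords z) \<noteq> 0} \<subseteq> U"
    using assms(2)
  proof (induction arbitrary: a)
    case (Int U1 U2)
    then obtain f g :: "('k, ('n \<times> 'n) + 'n) pexpr"
      where "peval f (coords a) \<noteq> 0" "{z. peval f (coords z) \<noteq> 0} \<subseteq> U1"
        and "peval g (coords a) \<noteq> 0" "{z. peval g (coords z) \<noteq> 0} \<subseteq> U2"
      by blast
    then show ?case by (intro exI[of _ "PMul f g"]) auto
  qed blast+
  with that show thesis by blast
qed

lemma topspace_zariski [simp]:
  "topspace (zariski :: ('k::comm_ring_1, 'n::finite) pt topology) = UNIV"
proof -
  have "{z. peval (PConst 1 :: ('k, ('n \<times> 'n) + 'n) pexpr) (coords z) \<noteq> 0} = UNIV"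
    by simp
  then show ?thesis unfolding zariski_def topology_generated_by_topspace by blast
qed

lemma connectedin_zariski_if_basic_opens_meet:
  fixes S :: "('k::idom, 'n::finite) pt set"
  assumes "\<And>a b f g. a \<in> S \<Longrightarrow> b \<in> S \<Longrightarrow>
             peval f (coords a) \<noteq> 0 \<Longrightarrow> peval g (coords b) \<noteq> 0 \<Longrightarrow>
             \<exists>z\<in>S. peval f (coords z) \<noteq> 0 \<and> peval g (coords z) \<noteq> 0"
  shows "connectedin zariski S"
  unfolding connectedin topspace_zariski
proof (intro conjI subset_UNIV notI, elim exE conjE)
  fix E1 E2 :: "('k, 'n) pt set"
  assume "openin zariski E1" "openin zariski E2" "E1 \<inter> E2 \<inter> S = {}"
    and "E1 \<inter> S \<noteq> {}" "E2 \<inter> S \<noteq> {}"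
  obtain a where "a \<in> E1" "a \<in> S" using \<open>E1 \<inter> S \<noteq> {}\<close> by blast
  obtain b where "b \<in> E2" "b \<in> S" using \<open>E2 \<inter> S \<noteq> {}\<close> by blast
  obtain f where "peval f (coords a) \<noteq> 0" "{z. peval f (coords z) \<noteq> 0} \<subseteq> E1"
    using zariski_basic_open_within[OF \<open>openin zariski E1\<close> \<open>a \<in> E1\<close>] .
  obtain g where "peval g (coords b) \<noteq> 0" "{z. peval g (coords z) \<noteq> 0} \<subseteq> E2"
    using zariski_basic_open_within[OF \<open>openin zariski E2\<close> \<open>b \<in> E2\<close>] .
  then obtain z where "z \<in> S" "z \<in> E1" "z \<in> E2"
    using assms[OF \<open>a \<in> S\<close> \<open>b \<in> S\<close> \<open>peval f (coords a) \<noteq> 0\<close>]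
      \<open>{z. peval f (coords z) \<noteq> 0} \<subseteq> E1\<close>
    by blast
  with \<open>E1 \<inter> E2 \<inter> S = {}\<close> show False by blast
qed

section \<open>The stabilizer as an open subset of an affine subspace\<close>

lemma matrix_inv_cancel:
  fixes g :: "'k::semiring_1 ^ 'n ^ 'n"
  assumes "invertible g"
  shows "g ** matrix_inv g = mat 1" and "matrix_inv g ** g = mat 1"
proof -
  have "\<exists>g'. g ** g' = mat 1 \<and> g' ** g = mat 1"
    using assms unfolding invertible_def .
  from someI_ex[OF this] show "g ** matrix_inv g = mat 1" "matrix_inv g ** g = mat 1"
    unfolding matrix_inv_def by auto
qed

lemma stabilizer_eq_bracket:
  fixes X :: "'k::field ^ 'n::finite ^ 'n"
  shows "stabilizer (X, w) = {z. invertible (fst z) \<and> bracket (X, w) z = (0, - w)}"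
proof -
  have "(g, v) \<in> stabilizer (X, w) \<longleftrightarrow> bracket (X, w) (g, v) = (0, - w)"
    if inv: "invertible g" for g v
  proof -
    have "g ** X ** matrix_inv g = X \<longleftrightarrow> X ** g = g ** X"
    proof
      assume "g ** X ** matrix_inv g = X"
      then have "g ** X ** matrix_inv g ** g = X ** g" by simp
      then show "X ** g = g ** X"
        using inv by (simp add: matrix_mul_assoc[symmetric] matrix_inv_cancel)
    next
      assume "X ** g = g ** X"
      then have "g ** X ** matrix_inv g = X ** (g ** matrix_inv g)"
        by (simp add: matrix_mul_assoc)
      then show "g ** X ** matrix_inv g = X"
        using inv by (simp add: matrix_inv_cancel)
    qed
    then show ?thesis
      using inv by (auto simp: stabilizer_def Ad_def bracket_def Let_def algebra_simps)
  qed
  then show ?thesis by (auto simp: stabilizer_def)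
qed

lemma bracket_pt_line: "bracket Xw (pt_line a d t) = pt_line (bracket Xw a) (bracket Xw d) t"
  by (simp add: bracket_def pt_line_def prod_eq_iff vec_eq_iff matrix_matrix_mult_def
      matrix_vector_mult_def sum.distrib sum_subtractf sum_distrib_left algebra_simps)

lemma bracket_diff: "bracket Xw (a - b) = bracket Xw a - bracket Xw b"
  by (simp add: bracket_def prod_eq_iff vec_eq_iff matrix_matrix_mult_def
      matrix_vector_mult_def sum_subtractf algebra_simps)

lemma bracket_identity: "bracket (X, w) (mat 1, 0) = (0, - w)"
  by (simp add: bracket_def)

lemma pt_line_in_stabilizer:
  fixes X :: "'k::field ^ 'n::finite ^ 'n"
  assumes "bracket (X, w) a = (0, - w)" and "d \<in> centralizer (X, w)"
    and "det (fst (pt_line a d t)) \<noteq> 0"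
  shows "pt_line a d t \<in> stabilizer (X, w)"
  using assms by (simp add: stabilizer_eq_bracket centralizer_def bracket_pt_line invertible_det_nz)

lemma centralizer_subset_Lie_stabilizer:
  fixes X :: "'k::field ^ 'n::finite ^ 'n"
  assumes "infinite (UNIV :: 'k set)"
  shows "centralizer (X, w) \<subseteq> Lie (stabilizer (X, w))"
proof
  fix z assume z: "z \<in> centralizer (X, w)"
  define e :: "('k, 'n) pt" where "e = (mat 1, 0)"
  have e: "bracket (X, w) e = (0, - w)" by (simp add: e_def bracket_identity)
  obtain D where D: "\<And>t. poly D t = det (fst (pt_line e z t))"
    using polynomial_in_coords_on_line[OF polynomial_in_coords_det] by blast
  have "D \<noteq> 0"
    using D[of 0] by (auto simp: e_def)
  show "z \<in> Lie (stabilizer (X, w))"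
    unfolding Lie_def
  proof (intro CollectI allI impI)
    fix p :: "('k, ('n \<times> 'n) + 'n) pexpr"
    assume vanish: "\<forall>y\<in>stabilizer (X, w). peval p (coords y) = 0"
    define q where "q = line_poly p (coords e) (coords z)"
    have "poly (q * D) t = 0" for t
    proof (cases "det (fst (pt_line e z t)) = 0")
      case False
      then have "pt_line e z t \<in> stabilizer (X, w)"
        using pt_line_in_stabilizer[OF e z] by blast
      then show ?thesis
        using vanish by (simp add: q_def poly_line_poly coords_pt_line[symmetric])
    qed (simp add: D)
    then have "q * D = 0"
      using poly_eqI_infinite[OF assms, of "q * D" 0] by simp
    with \<open>D \<noteq> 0\<close> have "q = 0" by simp
    then show "pdiff p (coords (mat 1, 0)) (coords z) = 0"
      using coeff_1_line_poly[of p "coords e" "coords z"] by (simp add: q_def e_def)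
  qed
qed

lemma Lie_stabilizer_subset_centralizer:
  fixes X :: "'k::field ^ 'n::finite ^ 'n"
  assumes "infinite (UNIV :: 'k set)"
  shows "Lie (stabilizer (X, w)) \<subseteq> centralizer (X, w)"
proof
  fix z assume z: "z \<in> Lie (stabilizer (X, w))"
  define e :: "('k, 'n) pt" where "e = (mat 1, 0)"
  have "coords (bracket (X, w) z) c = 0" for c
  proof -
    let ?F = "\<lambda>y. coords (bracket (X, w) y) c - coords ((0, - w) :: ('k, 'n) pt) c"
    obtain p where p: "\<And>y. peval p (coords y) = ?F y"
      using polynomial_in_diff[OF polynomial_in_coords_bracket polynomial_in_const]
      unfolding polynomial_in_def by blast
    have "\<forall>y\<in>stabilizer (X, w). peval p (coords y) = 0"
      by (simp add: p stabilizer_eq_bracket)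
    with z have "pdiff p (coords e) (coords z) = 0"
      by (simp add: Lie_def e_def)
    moreover have
      "peval p (\<lambda>v. coords e v + t * coords z v) = 0 + t * coords (bracket (X, w) z) c" for t
    proof -
      have "bracket (X, w) (pt_line e z t) = pt_line (0, - w) (bracket (X, w) z) t"
        by (simp add: bracket_pt_line e_def bracket_identity)
      then show ?thesis
        unfolding coords_pt_line[symmetric] p by (simp add: coords_pt_line)
    qed
    ultimately show ?thesis
      using pdiff_eq_if_affine_on_line[OF assms] by metis
  qed
  then have "bracket (X, w) z = (0, 0)"
    by (intro coords_inject) (simp add: fun_eq_iff coords_def split: sum.split)
  then show "z \<in> centralizer (X, w)" by (simp add: centralizer_def)
qed

lemma connectedin_zariski_stabilizer:
  fixes X :: "'k::field ^ 'n::finite ^ 'n"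
  assumes "infinite (UNIV :: 'k set)"
  shows "connectedin zariski (stabilizer (X, w))"
proof (rule connectedin_zariski_if_basic_opens_meet)
  fix a b f g
  assume a: "a \<in> stabilizer (X, w)" and b: "b \<in> stabilizer (X, w)"
    and fa: "peval f (coords a) \<noteq> 0" and gb: "peval g (coords b) \<noteq> 0"
  define d where "d = b - a"
  have bracket_a: "bracket (X, w) a = (0, - w)" and "det (fst a) \<noteq> 0"
    using a by (simp_all add: stabilizer_eq_bracket invertible_det_nz)
  have d: "d \<in> centralizer (X, w)"
    using a b by (simp add: d_def bracket_diff stabilizer_eq_bracket centralizer_def zero_prod_def)
  obtain F G D where F: "\<And>t. poly F t = peval f (coords (pt_line a d t))"
    and G: "\<And>t. poly G t = peval g (coords (pt_line a d t))"
    and D: "\<And>t. poly D t = det (fst (pt_line a d t))"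
    using polynomial_in_coords_on_line[OF polynomial_in_peval]
      polynomial_in_coords_on_line[OF polynomial_in_coords_det] by metis
  have "F \<noteq> 0" using F[of 0] fa by auto
  moreover have "G \<noteq> 0" using G[of 1] gb by (auto simp: d_def)
  moreover have "D \<noteq> 0" using D[of 0] \<open>det (fst a) \<noteq> 0\<close> by auto
  ultimately obtain t where t: "poly (F * G * D) t \<noteq> 0"
    using poly_nonzero_somewhere[OF assms] by (metis mult_eq_0_iff)
  then have "pt_line a d t \<in> stabilizer (X, w)"
    by (intro pt_line_in_stabilizer[OF bracket_a d]) (simp add: D)
  with t show "\<exists>z\<in>stabilizer (X, w). peval f (coords z) \<noteq> 0 \<and> peval g (coords z) \<noteq> 0"
    by (auto simp: F G)
qed

theorem lemma1p1:
  fixes X :: "'k::field ^ 'n::finite ^ 'n" and w :: "'k ^ 'n"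
  assumes "alg_closed TYPE('k)"
    and "nilpotent_mat X"
  shows "centralizer (X, w) = Lie (stabilizer (X, w)) \<and>
         connectedin zariski (stabilizer (X, w))"
proof -
  have "infinite (UNIV :: 'k set)"
    using assms(1) by (rule infinite_UNIV_if_alg_closed)
  then show ?thesis
    using centralizer_subset_Lie_stabilizer Lie_stabilizer_subset_centralizer
      connectedin_zariski_stabilizer by blast
qed

end
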